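(* For every integer $n\ge3$, let $\mathcal{S}_n$ be the regular $n$-gon state space. Then $\lambda_{max}(\mathcal{S}_n)=2$ when $n$ is even and $\lambda_{max}(\mathcal{S}_n)=1+\sec(\pi/n)>2$ when $n$ is odd.
   Context: The regular $n$-gon state space $\mathcal{S}_n\subset\mathbb{R}^3$ is the convex hull of the points $s_j=(r_n\cos(2j\pi/n),\,r_n\sin(2j\pi/n),\,1)^T$, $j=1,\ldots,n$, where $r_n=\sqrt{\sec(\pi/n)}$. Effects are linear functionals $e$ on $\mathbb{R}^3$ with $0\le e(s)\le1$ for all $s\in\mathcal{S}_n$; the unit effect is $u=(0,0,1)$ (acting by the dot product). For a linear functional $f$, $\|f\|=\max_{s\in\mathcal{S}_n}|f(s)|$. A measurement with finite outcome set $\Omega$ is a map $x\mapsto\mathsf{M}_x$ to effects with $\sum_x\mathsf{M}_x=u$; its decoding power is $\lambda_{max}(\mathsf{M})=\sum_x\|\mathsf{M}_x\|$, and the information storability $\lambda_{max}(\mathcal{S}_n)$ is the supremum of $\lambda_{max}(\mathsf{M})$ over all such measurements. *)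

theory Defs
  imports "HOL-Analysis.Analysis"
begin

text \<open>Regular n-gon state space in R^3. Effects/functionals are represented by
  vectors in R^3 acting via the inner (dot) product.\<close>

definition ngon_r :: "nat \<Rightarrow> real" where
  "ngon_r n = sqrt (1 / cos (pi / real n))"

definition ngon_vertex :: "nat \<Rightarrow> nat \<Rightarrow> real^3" where
  "ngon_vertex n j = vector [ngon_r n * cos (2 * real j * pi / real n),
                             ngon_r n * sin (2 * real j * pi / real n), 1]"

definition ngon_states :: "nat \<Rightarrow> (real^3) set" where
  "ngon_states n = convex hull (ngon_vertex n ` {1..n})"

definition unit_effect :: "real^3" where
  "unit_effect = vector [0, 0, 1]"

definition is_effect :: "nat \<Rightarrow> real^3 \<Rightarrow> bool" where
  "is_effect n e \<longleftrightarrow> (\<forall>s\<in>ngon_states n. 0 \<le> e \<bullet> s \<and> e \<bullet> s \<le> 1)"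

definition fnorm :: "nat \<Rightarrow> real^3 \<Rightarrow> real" where
  "fnorm n f = (SUP s\<in>ngon_states n. \<bar>f \<bullet> s\<bar>)"

definition is_measurement :: "nat \<Rightarrow> nat set \<Rightarrow> (nat \<Rightarrow> real^3) \<Rightarrow> bool" where
  "is_measurement n \<Omega> M \<longleftrightarrow> finite \<Omega> \<and> (\<forall>x\<in>\<Omega>. is_effect n (M x)) \<and> (\<Sum>x\<in>\<Omega>. M x) = unit_effect"

definition decoding_power :: "nat \<Rightarrow> nat set \<Rightarrow> (nat \<Rightarrow> real^3) \<Rightarrow> real" where
  "decoding_power n \<Omega> M = (\<Sum>x\<in>\<Omega>. fnorm n (M x))"

definition storability :: "nat \<Rightarrow> real" where
  "storability n = (SUP (\<Omega>, M)\<in>{(\<Omega>, M). is_measurement n \<Omega> M}. decoding_power n \<Omega> M)"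

end

theory Submission
  imports Defs
begin

text \<open>Write u for the centre (0,0,1) of the n-gon and theta_j = 2 j pi / n.
  Upper bound: if the map phi s = u + (u - s) / a sends the vertices, hence the whole n-gon, into
  the n-gon, then e s + a e (phi s) = (1 + a) e u gives norm e \<le> (1 + a) e u for every effect e,
  and summing over a measurement (whose effects add up to u, with u \<bullet> u = 1) bounds the
  decoding power by 1 + a. For even n, a = 1 works since phi maps each vertex to the opposite
  one; for odd n, a = 1 / cos (pi / n) works since phi maps each vertex to the midpoint of the
  opposite edge.
  Lower bound: the n rotated effects M_k with M_k s_j = (1 + a cos (theta_j - theta_k)) / n form a
  measurement as soon as 1 + a cos theta_d \<ge> 0 for all d, and norm M_k \<ge> M_k s_k = (1 + a) / n.\<close>

abbreviation ngon_angle :: "nat \<Rightarrow> nat \<Rightarrow> real" where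
  "ngon_angle n j \<equiv> 2 * real j * pi / real n"

lemma cos_pi_div_ge_half:
  assumes "n \<ge> 3"
  shows "cos (pi / real n) \<ge> 1 / 2"
proof -
  have "pi / real n \<le> pi / 3"
    using assms by (intro divide_left_mono) auto
  then show ?thesis
    using cos_monotone_0_pi_le[of "pi / real n" "pi / 3"] assms by (simp add: cos_60)
qed

lemma cos_pi_div_lt_one:
  assumes "n \<ge> 2"
  shows "cos (pi / real n) < 1"
proof -
  have "0 < pi / real n" "pi / real n < pi"
    using assms by (auto simp: field_simps)
  then show ?thesis
    using cos_monotone_0_pi[of 0 "pi / real n"] by simp
qed

lemma ngon_r_pos: "n \<ge> 3 \<Longrightarrow> ngon_r n > 0"
  using cos_pi_div_ge_half[of n] by (simp add: ngon_r_def)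

lemma inner_ngon_vertex:
  "e \<bullet> ngon_vertex n j =
     ngon_r n * (e $ 1 * cos (ngon_angle n j) + e $ 2 * sin (ngon_angle n j)) + e $ 3"
  by (simp add: ngon_vertex_def inner_vec_def sum_3 algebra_simps)

lemma inner_unit_effect: "e \<bullet> unit_effect = e $ 3"
  by (simp add: unit_effect_def inner_vec_def sum_3)

lemma sin_cos_ngon_angle_mod:
  assumes "n > 0"
  shows "sin (ngon_angle n (j mod n)) = sin (ngon_angle n j) \<and>
         cos (ngon_angle n (j mod n)) = cos (ngon_angle n j)"
proof -
  have "real j = real n * real (j div n) + real (j mod n)"
    by (metis div_mult_mod_eq mult.commute of_nat_add of_nat_mult)
  then have "ngon_angle n j = ngon_angle n (j mod n) + 2 * pi * real (j div n)"
    using assms by (simp add: field_simps)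
  then show ?thesis
    by (subst sin_cos_eq_iff) (auto intro: exI[of _ "- int (j div n)"])
qed

lemma ngon_vertex_mod: "n > 0 \<Longrightarrow> ngon_vertex n (j mod n) = ngon_vertex n j"
  using sin_cos_ngon_angle_mod[of n j] by (simp add: ngon_vertex_def)

lemma ngon_vertex_in_states:
  assumes "n > 0"
  shows "ngon_vertex n j \<in> ngon_states n"
proof -
  define k where "k = (if j mod n = 0 then n else j mod n)"
  have "k \<in> {1..n}" "k mod n = j mod n"
    using assms by (auto simp: k_def intro: less_imp_le)
  moreover have "ngon_vertex n j = ngon_vertex n k"
    by (metis ngon_vertex_mod[OF assms] \<open>k mod n = j mod n\<close>)
  ultimately have "ngon_vertex n j \<in> ngon_vertex n ` {1..n}"
    by blast
  then show ?thesis
    unfolding ngon_states_def by (rule hull_inc)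
qed

lemma sum_cis_ngon_angle:
  assumes "n \<ge> 2"
  shows "(\<Sum>k\<in>{1..n}. cis (ngon_angle n k)) = 0"
proof -
  define \<omega> where "\<omega> = cis (2 * pi / real n)"
  have power_\<omega>: "\<omega> ^ k = cis (2 * pi * real k / real n)" for k
    unfolding \<omega>_def Complex.DeMoivre by (simp add: ac_simps)
  have "(\<Sum>k<n. \<omega> ^ k) = \<Sum>{z::complex. z ^ n = 1}"
    unfolding power_\<omega> using assms by (intro sum.reindex_bij_betw Complex.bij_betw_roots_unity) auto
  also have "\<dots> = 0"
    using assms by (intro sum_roots_unity) auto
  finally have "(\<Sum>k\<in>{1..n}. \<omega> ^ k) = 0"
    by (simp add: sum.atLeast1_atMost_eq sum_distrib_left[symmetric])
  then show ?thesis
    by (simp add: power_\<omega> ac_simps)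
qed

lemma sum_cos_ngon_angle: "n \<ge> 2 \<Longrightarrow> (\<Sum>k\<in>{1..n}. cos (ngon_angle n k)) = 0"
  using arg_cong[OF sum_cis_ngon_angle, of n Re] by simp

lemma sum_sin_ngon_angle: "n \<ge> 2 \<Longrightarrow> (\<Sum>k\<in>{1..n}. sin (ngon_angle n k)) = 0"
  using arg_cong[OF sum_cis_ngon_angle, of n Im] by simp

lemma fnorm_le:
  assumes "n > 0" and "\<And>s. s \<in> ngon_states n \<Longrightarrow> \<bar>e \<bullet> s\<bar> \<le> b"
  shows "fnorm n e \<le> b"
  unfolding fnorm_def using assms ngon_vertex_in_states[OF assms(1)]
  by (intro cSUP_least) auto

lemma inner_le_fnorm:
  assumes "is_effect n e" and "s \<in> ngon_states n"
  shows "e \<bullet> s \<le> fnorm n e"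
proof -
  have "bdd_above ((\<lambda>s. \<bar>e \<bullet> s\<bar>) ` ngon_states n)"
    using assms(1) unfolding is_effect_def by (intro bdd_aboveI2[where M = 1]) auto
  then have "\<bar>e \<bullet> s\<bar> \<le> fnorm n e"
    unfolding fnorm_def using assms(2) by (rule cSUP_upper2) simp
  then show ?thesis by simp
qed

lemma is_effectI_vertices:
  assumes "\<And>j. j \<in> {1..n} \<Longrightarrow> 0 \<le> e \<bullet> ngon_vertex n j \<and> e \<bullet> ngon_vertex n j \<le> 1"
  shows "is_effect n e"
proof -
  have "ngon_states n \<subseteq> {s. 0 \<le> e \<bullet> s} \<inter> {s. e \<bullet> s \<le> 1}"
    unfolding ngon_states_def using assms
    by (intro hull_minimal) (auto intro: convex_Int convex_halfspace_le convex_halfspace_ge)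
  then show ?thesis
    unfolding is_effect_def by auto
qed

lemma effect_le_of_reflection:
  assumes "a > 0"
    and reflection: "\<And>j. j \<in> {1..n} \<Longrightarrow>
      unit_effect + (1 / a) *\<^sub>R (unit_effect - ngon_vertex n j) \<in> ngon_states n"
    and "is_effect n e" and "s \<in> ngon_states n"
  shows "e \<bullet> s \<le> (1 + a) * e $ 3"
proof -
  define \<phi> where "\<phi> x = (1 + 1 / a) *\<^sub>R unit_effect + (- 1 / a) *\<^sub>R x" for x :: "real^3"
  have "\<phi> ` ngon_states n = convex hull (\<phi> ` ngon_vertex n ` {1..n})"
    unfolding ngon_states_def \<phi>_def by (rule convex_hull_affinity[symmetric])
  also have "\<dots> \<subseteq> ngon_states n"
    using reflection unfolding ngon_states_def
    by (intro hull_minimal) (auto simp: \<phi>_def algebra_simps)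
  finally have "0 \<le> e \<bullet> \<phi> s"
    using assms(3,4) unfolding is_effect_def by auto
  moreover have "e \<bullet> s + a * (e \<bullet> \<phi> s) = (1 + a) * e $ 3"
    using assms(1) by (simp add: \<phi>_def inner_unit_effect algebra_simps)
  ultimately show ?thesis
    using assms(1) by (smt (verit) mult_nonneg_nonneg)
qed

lemma decoding_power_le_of_reflection:
  assumes "n > 0" and "a > 0"
    and reflection: "\<And>j. j \<in> {1..n} \<Longrightarrow>
      unit_effect + (1 / a) *\<^sub>R (unit_effect - ngon_vertex n j) \<in> ngon_states n"
    and M: "is_measurement n \<Omega> M"
  shows "decoding_power n \<Omega> M \<le> 1 + a"
proof -
  have effects: "\<And>x. x \<in> \<Omega> \<Longrightarrow> is_effect n (M x)"
    and sum_M: "(\<Sum>x\<in>\<Omega>. M x) = unit_effect"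
    using M unfolding is_measurement_def by auto
  have "fnorm n (M x) \<le> (1 + a) * M x $ 3" if "x \<in> \<Omega>" for x
    using effects[OF that] effect_le_of_reflection[OF assms(2) reflection effects[OF that]]
    by (intro fnorm_le[OF assms(1)]) (auto simp: is_effect_def)
  then have "decoding_power n \<Omega> M \<le> (\<Sum>x\<in>\<Omega>. (1 + a) * M x $ 3)"
    unfolding decoding_power_def by (rule sum_mono)
  also have "\<dots> = (1 + a) * (\<Sum>x\<in>\<Omega>. M x) $ 3"
    by (simp add: sum_distrib_left)
  also have "\<dots> = 1 + a"
    by (simp add: sum_M unit_effect_def)
  finally show ?thesis .
qed

definition covariant_effect :: "nat \<Rightarrow> real \<Rightarrow> nat \<Rightarrow> real^3" where
  "covariant_effect n a k = vector [a * cos (ngon_angle n k) / (real n * ngon_r n),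
                                    a * sin (ngon_angle n k) / (real n * ngon_r n), 1 / real n]"

lemma inner_covariant_effect_vertex:
  assumes "n \<ge> 3"
  shows "covariant_effect n a k \<bullet> ngon_vertex n j =
           (1 + a * cos (ngon_angle n j - ngon_angle n k)) / real n"
  unfolding cos_diff using ngon_r_pos[OF assms] assms
  by (simp add: inner_ngon_vertex covariant_effect_def field_simps)

lemma cos_ngon_angle_diff:
  assumes "0 < n" and "k \<le> n"
  shows "cos (ngon_angle n j - ngon_angle n k) = cos (ngon_angle n (j + n - k))"
proof -
  have "ngon_angle n (j + n - k) = ngon_angle n j - ngon_angle n k + 2 * pi"
    using assms by (simp add: of_nat_diff field_simps)
  then show ?thesis by simp
qed

lemma is_measurement_covariant_effect:
  assumes n: "n \<ge> 3" and "a \<ge> 0" and "1 + a \<le> real n"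
    and nonneg: "\<And>d. 0 \<le> 1 + a * cos (ngon_angle n d)"
  shows "is_measurement n {1..n} (covariant_effect n a)"
proof -
  have "is_effect n (covariant_effect n a k)" if "k \<in> {1..n}" for k
  proof (rule is_effectI_vertices)
    fix j
    have "a * cos (ngon_angle n (j + n - k)) \<le> a"
      using \<open>a \<ge> 0\<close> by (simp add: mult_left_le)
    then show "0 \<le> covariant_effect n a k \<bullet> ngon_vertex n j \<and>
               covariant_effect n a k \<bullet> ngon_vertex n j \<le> 1"
      using that n nonneg[of "j + n - k"] \<open>1 + a \<le> real n\<close>
      by (simp add: inner_covariant_effect_vertex cos_ngon_angle_diff)
  qed
  moreover have "(\<Sum>k\<in>{1..n}. covariant_effect n a k) = unit_effect"
    using n sum_cos_ngon_angle[of n] sum_sin_ngon_angle[of n]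
    by (simp add: vec_eq_iff forall_3 covariant_effect_def unit_effect_def
                  sum_divide_distrib[symmetric] sum_distrib_left[symmetric])
  ultimately show ?thesis
    unfolding is_measurement_def by auto
qed

lemma decoding_power_covariant_effect_ge:
  assumes "n \<ge> 3" and "is_measurement n {1..n} (covariant_effect n a)"
  shows "1 + a \<le> decoding_power n {1..n} (covariant_effect n a)"
proof -
  have "(1 + a) / real n \<le> fnorm n (covariant_effect n a k)" if "k \<in> {1..n}" for k
    using inner_le_fnorm[of n "covariant_effect n a k" "ngon_vertex n k"] assms that
    by (simp add: is_measurement_def inner_covariant_effect_vertex ngon_vertex_in_states)
  then have "(\<Sum>k\<in>{1..n}. (1 + a) / real n) \<le> decoding_power n {1..n} (covariant_effect n a)"
    unfolding decoding_power_def by (rule sum_mono)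
  then show ?thesis
    using assms(1) by simp
qed

lemma storability_eqI:
  assumes "\<And>\<Omega> M. is_measurement n \<Omega> M \<Longrightarrow> decoding_power n \<Omega> M \<le> b"
    and "is_measurement n \<Omega>\<^sub>0 M\<^sub>0" and "decoding_power n \<Omega>\<^sub>0 M\<^sub>0 = b"
  shows "storability n = b"
  unfolding storability_def
  by (rule cSup_eq_maximum) (use assms in force)+

lemma storability_eq_of_reflection:
  assumes n: "n \<ge> 3" and "a > 0" and "1 + a \<le> real n"
    and reflection: "\<And>j. j \<in> {1..n} \<Longrightarrow>
      unit_effect + (1 / a) *\<^sub>R (unit_effect - ngon_vertex n j) \<in> ngon_states n"
    and nonneg: "\<And>d. 0 \<le> 1 + a * cos (ngon_angle n d)"
  shows "storability n = 1 + a"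
proof -
  have upper: "decoding_power n \<Omega> M \<le> 1 + a" if "is_measurement n \<Omega> M" for \<Omega> M
    using n \<open>a > 0\<close> reflection that by (intro decoding_power_le_of_reflection) auto
  have M: "is_measurement n {1..n} (covariant_effect n a)"
    using assms by (intro is_measurement_covariant_effect) auto
  show ?thesis
    using upper[OF M] decoding_power_covariant_effect_ge[OF n M]
    by (intro storability_eqI[OF upper M]) auto
qed

lemma ngon_vertex_add_half:
  assumes "n = 2 * m" and "n > 0"
  shows "ngon_vertex n (j + m) = unit_effect + (unit_effect - ngon_vertex n j)"
proof -
  have "ngon_angle n (j + m) = ngon_angle n j + pi"
    using assms by (simp add: field_simps)
  then show ?thesis
    by (simp add: ngon_vertex_def unit_effect_def vec_eq_iff forall_3)
qed

lemma storability_even: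
  assumes "n \<ge> 3" and "even n"
  shows "storability n = 2"
proof -
  obtain m where m: "n = 2 * m"
    using \<open>even n\<close> by blast
  have "storability n = 1 + 1"
  proof (rule storability_eq_of_reflection)
    show "unit_effect + (1 / 1) *\<^sub>R (unit_effect - ngon_vertex n j) \<in> ngon_states n" for j
      using assms ngon_vertex_in_states[of n "j + m"] ngon_vertex_add_half[OF m] by simp
    show "0 \<le> 1 + 1 * cos (ngon_angle n d)" for d
      using cos_ge_minus_one[of "ngon_angle n d"] by linarith
  qed (use assms in auto)
  then show ?thesis by simp
qed

lemma ngon_vertex_opposite_midpoint:
  assumes "n = 2 * m + 1"
  shows "(1 / 2) *\<^sub>R (ngon_vertex n (j + m) + ngon_vertex n (j + m + 1)) =
           unit_effect + cos (pi / real n) *\<^sub>R (unit_effect - ngon_vertex n j)"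
proof -
  have "2 * real (j + m) = 2 * real j + (real n - 1)"
       "2 * real (j + m + 1) = 2 * real j + (real n + 1)"
    using assms by simp_all
  moreover have "real n > 0"
    using assms by simp
  ultimately have angles: "ngon_angle n (j + m) = (ngon_angle n j + pi) - pi / real n"
       "ngon_angle n (j + m + 1) = (ngon_angle n j + pi) + pi / real n"
    by (simp_all only:) (simp_all add: field_simps)
  show ?thesis
    unfolding ngon_vertex_def angles
    by (simp add: unit_effect_def vec_eq_iff forall_3
                  cos_add cos_diff sin_add sin_diff field_simps)
qed

lemma cos_ngon_angle_ge_odd:
  assumes "odd n"
  shows "- cos (pi / real n) \<le> cos (ngon_angle n d)"
proof -
  have n: "real n > 0"
    using assms by (cases n) auto
  have first_half: "- cos (pi / real n) \<le> cos (ngon_angle n e)" if "2 * e + 1 \<le> n" for e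
  proof -
    have "(2 * real e + 1) * pi \<le> real n * pi"
      using that by (intro mult_right_mono) auto
    then have "ngon_angle n e \<le> pi - pi / real n"
      using n by (simp add: field_simps)
    then have "cos (pi - pi / real n) \<le> cos (ngon_angle n e)"
      using n by (intro cos_monotone_0_pi_le) (auto simp: field_simps)
    then show ?thesis by simp
  qed
  define e where "e = d mod n"
  have "e < n"
    using n by (simp add: e_def)
  have "- cos (pi / real n) \<le> cos (ngon_angle n e)"
  proof (cases "2 * e + 1 \<le> n")
    case True
    then show ?thesis by (rule first_half)
  next
    case False
    then have "2 * (n - e) + 1 \<le> n"
      using \<open>odd n\<close> \<open>e < n\<close> by presburger
    moreover have "ngon_angle n e = 2 * pi - ngon_angle n (n - e)"
      using n \<open>e < n\<close> by (simp add: of_nat_diff field_simps)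
    ultimately show ?thesis
      using first_half by (simp add: cos_diff)
  qed
  then show ?thesis
    using sin_cos_ngon_angle_mod[of n d] n by (simp add: e_def)
qed

lemma storability_odd:
  assumes "n \<ge> 3" and "odd n"
  shows "storability n = 1 + 1 / cos (pi / real n)"
proof -
  obtain m where m: "n = 2 * m + 1"
    using \<open>odd n\<close> oddE by blast
  define C where "C = cos (pi / real n)"
  have C: "1 / 2 \<le> C" "C < 1"
    using cos_pi_div_ge_half[of n] cos_pi_div_lt_one[of n] assms by (auto simp: C_def)
  show ?thesis
    unfolding C_def[symmetric]
  proof (rule storability_eq_of_reflection)
    have "1 / C \<le> 2"
      using C by (simp add: field_simps)
    then show "1 + 1 / C \<le> real n"
      using \<open>n \<ge> 3\<close> by linarith
    show "unit_effect + (1 / (1 / C)) *\<^sub>R (unit_effect - ngon_vertex n j) \<in> ngon_states n" for j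
    proof -
      have "ngon_vertex n (j + m) \<in> ngon_states n" "ngon_vertex n (j + m + 1) \<in> ngon_states n"
        using assms by (simp_all add: ngon_vertex_in_states)
      then have "(1 / 2) *\<^sub>R (ngon_vertex n (j + m) + ngon_vertex n (j + m + 1)) \<in> ngon_states n"
        unfolding scaleR_right_distrib by (intro convexD) (auto simp: ngon_states_def)
      then show ?thesis
        using ngon_vertex_opposite_midpoint[OF m, of j] by (simp add: C_def)
    qed
    show "0 \<le> 1 + 1 / C * cos (ngon_angle n d)" for d
      using cos_ngon_angle_ge_odd[OF \<open>odd n\<close>, of d] C by (simp add: C_def field_simps)
  qed (use assms C in auto)
qed

theorem corollary3:
  fixes n :: nat
  assumes "n \<ge> 3"
  shows "(even n \<longrightarrow> storability n = 2) \<and>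
         (odd n \<longrightarrow> storability n = 1 + 1 / cos (pi / real n) \<and> 1 + 1 / cos (pi / real n) > 2)"
proof -
  have "1 < 1 / cos (pi / real n)"
    using cos_pi_div_ge_half[of n] cos_pi_div_lt_one[of n] assms by simp
  then show ?thesis
    using storability_even[OF assms] storability_odd[OF assms] by auto
qed

end
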